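(* A mapping $f\in C^1(\mathbb{R}^n;\mathbb{R}^n)$ is a (global) diffeomorphism onto $\mathbb{R}^n$ if and only if (i) $\det f'(x)\neq0$ for every $x\in\mathbb{R}^n$, and (ii) there exists a coercive function $k\in C^1(\mathbb{R}^n;\mathbb{R}_+)$ such that $$\sup\{\|k'(x)\circ f'(x)^{-1}\|: x\in\mathbb{R}^n\}<+\infty,$$ equivalently $\sup\{|\nabla k(x)\cdot f'(x)^{-1}u|: x\in\mathbb{R}^n,\ u\in\mathbb{R}^n,\ |u|=1\}<+\infty$.
   Context: $\mathbb{R}_+=[0,+\infty)$. A function $k:\mathbb{R}^n\to\mathbb{R}_+$ is coercive if it is continuous and $k(x)\to+\infty$ as $|x|\to+\infty$. $\|\cdot\|$ denotes the operator norm of a linear functional. *)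

theory Defs
  imports "HOL-Analysis.Analysis"
begin

definition C1_with :: "('a::real_normed_vector \<Rightarrow> 'b::real_normed_vector) \<Rightarrow> ('a \<Rightarrow> ('a \<Rightarrow>\<^sub>L 'b)) \<Rightarrow> bool" where
  "C1_with f D \<longleftrightarrow> (\<forall>x. (f has_derivative blinfun_apply (D x)) (at x)) \<and> continuous_on UNIV D"

definition C1_map :: "('a::real_normed_vector \<Rightarrow> 'b::real_normed_vector) \<Rightarrow> bool" where
  "C1_map f \<longleftrightarrow> (\<exists>D. C1_with f D)"

definition global_diffeo :: "('a::real_normed_vector \<Rightarrow> 'a) \<Rightarrow> bool" where
  "global_diffeo f \<longleftrightarrow> C1_map f \<and> (\<exists>g. (\<forall>x. g (f x) = x) \<and> (\<forall>y. f (g y) = y) \<and> C1_map g)"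

definition coercive :: "('a::real_normed_vector \<Rightarrow> real) \<Rightarrow> bool" where
  "coercive k \<longleftrightarrow> continuous_on UNIV k \<and> filterlim k at_top at_infinity"

end

theory Submission
  imports Defs
begin

text \<open>If \<open>f\<close> is a global diffeomorphism with inverse \<open>g\<close>, take \<open>k = sqrt (1 + \<bar>f\<bar>\<^sup>2)\<close>: its
  sublevel sets are images of balls under the continuous map \<open>g\<close>, so \<open>k\<close> is coercive, and
  \<open>k' x (f' x\<^sup>-\<^sup>1 u) = \<langle>f x, u\<rangle> / k x\<close> has norm at most \<open>\<bar>u\<bar>\<close>.

  Conversely, along a lift \<open>\<gamma>\<close> through \<open>f\<close> of a straight segment with velocity \<open>w\<close>, the
  derivative of \<open>k \<circ> \<gamma>\<close> is \<open>k' (f'\<^sup>-\<^sup>1 w)\<close>, so \<open>k \<circ> \<gamma>\<close> grows at most linearly in time and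
  the lift stays in a compact sublevel set of \<open>k\<close>. A continuity argument in time then lifts the
  segments from \<open>f x\<^sub>0\<close> to \<open>y\<close> for all \<open>y\<close> near a given point simultaneously and continuously
  in \<open>y\<close>. The endpoint map \<open>g\<close> is a continuous right inverse of \<open>f\<close>, hence injective; by
  invariance of domain its range is open, and it is closed as the fixed-point set of \<open>g \<circ> f\<close>. So
  \<open>g\<close> is onto, \<open>f\<close> is bijective, and the inverse function theorem makes \<open>g\<close> a \<open>C\<^sup>1\<close> map.\<close>

lemma real_induct_downward_closed:
  fixes P :: "real \<Rightarrow> bool"
  assumes down: "\<And>s t. 0 \<le> s \<Longrightarrow> s \<le> t \<Longrightarrow> P t \<Longrightarrow> P s"
    and step: "\<And>t. 0 \<le> t \<Longrightarrow> (\<And>s. 0 \<le> s \<Longrightarrow> s < t \<Longrightarrow> P s) \<Longrightarrow> \<exists>u>t. P u"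
    and "0 \<le> a"
  shows "P a"
proof (rule ccontr)
  let ?A = "{t. 0 \<le> t \<and> \<not> P t}"
  assume "\<not> P a"
  then have ne: "?A \<noteq> {}" using \<open>0 \<le> a\<close> by auto
  have bdd: "bdd_below ?A" by (rule bdd_belowI[of _ 0]) auto
  have "0 \<le> Inf ?A" using ne by (rule cInf_greatest) auto
  moreover have "P s" if "0 \<le> s" "s < Inf ?A" for s
    using cInf_lower[OF _ bdd, of s] that by force
  ultimately obtain u where "Inf ?A < u" "P u" using step by blast
  moreover have "u \<le> Inf ?A"
    using ne by (rule cInf_greatest) (metis (mono_tags) down \<open>P u\<close> linorder_le_cases mem_Collect_eq)
  ultimately show False by simp
qed

lemma continuous_on_case_prod_fix_fst:
  assumes "continuous_on (A \<times> B) (case_prod \<Phi>)" "a \<in> A"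
  shows "continuous_on B (\<Phi> a)"
proof -
  have "continuous_on B (\<lambda>b. case_prod \<Phi> (a, b))"
    by (rule continuous_on_compose2[OF assms(1)]) (use assms(2) in \<open>auto intro!: continuous_intros\<close>)
  then show ?thesis by simp
qed

lemma continuous_on_case_prod_fix_snd:
  assumes "continuous_on (A \<times> B) (case_prod \<Phi>)" "b \<in> B"
  shows "continuous_on A (\<lambda>a. \<Phi> a b)"
proof -
  have "continuous_on A (\<lambda>a. case_prod \<Phi> (a, b))"
    by (rule continuous_on_compose2[OF assms(1)]) (use assms(2) in \<open>auto intro!: continuous_intros\<close>)
  then show ?thesis by simp
qed

lemma eq_on_connected_if_locally_injective:
  fixes f :: "'a::real_normed_vector \<Rightarrow> 'b"
  assumes inj: "\<And>x. \<exists>U. open U \<and> x \<in> U \<and> inj_on f U"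
    and "connected S" and \<gamma>: "continuous_on S \<gamma>" and \<eta>: "continuous_on S \<eta>"
    and "a \<in> S" "\<gamma> a = \<eta> a" and same: "\<And>s. s \<in> S \<Longrightarrow> f (\<gamma> s) = f (\<eta> s)"
    and "s \<in> S"
  shows "\<gamma> s = \<eta> s"
proof -
  let ?T = "{s \<in> S. \<gamma> s - \<eta> s = 0}"
  have "closedin (top_of_set S) ?T"
    by (intro continuous_closedin_preimage_constant continuous_intros \<gamma> \<eta>)
  moreover have "openin (top_of_set S) ?T"
  proof (subst openin_subopen, intro ballI)
    fix t assume "t \<in> ?T"
    moreover obtain U where U: "open U" "\<gamma> t \<in> U" "inj_on f U" using inj by blast
    ultimately have "\<eta> t \<in> U" "t \<in> S" by auto
    let ?W = "(S \<inter> \<gamma> -` U) \<inter> (S \<inter> \<eta> -` U)"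
    have "openin (top_of_set S) ?W"
      using \<gamma> \<eta> \<open>open U\<close> by (intro openin_Int continuous_openin_preimage_gen)
    moreover have "?W \<subseteq> ?T" using same U(3) by (auto dest: inj_onD)
    ultimately show "\<exists>W. openin (top_of_set S) W \<and> t \<in> W \<and> W \<subseteq> ?T"
      using U(2) \<open>\<eta> t \<in> U\<close> \<open>t \<in> S\<close> by blast
  qed
  moreover have "a \<in> ?T" using \<open>a \<in> S\<close> \<open>\<gamma> a = \<eta> a\<close> by simp
  ultimately have "?T = S" using \<open>connected S\<close> unfolding connected_clopen by blast
  then show ?thesis using \<open>s \<in> S\<close> by auto
qed

lemma norm_blinfun_inverse_le_twice:
  fixes F F0 G G0 :: "'a::real_normed_vector \<Rightarrow>\<^sub>L 'a"
  assumes G0F0: "G0 o\<^sub>L F0 = id_blinfun" and FG: "F o\<^sub>L G = id_blinfun"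
    and close: "norm (F0 - F) * norm G0 \<le> 1 / 2"
  shows "norm G \<le> 2 * norm G0"
proof (rule norm_blinfun_bound)
  fix w
  let ?v = "blinfun_apply G w"
  have "?v = blinfun_apply G0 (blinfun_apply F0 ?v)"
    using G0F0 by (metis blinfun_apply_blinfun_compose blinfun_apply_id_blinfun)
  then have "norm ?v \<le> norm G0 * norm (blinfun_apply F0 ?v)"
    by (metis norm_blinfun)
  also have "blinfun_apply F0 ?v = w + blinfun_apply (F0 - F) ?v"
    using FG by (simp add: blinfun.diff_left) (metis blinfun_apply_blinfun_compose blinfun_apply_id_blinfun)
  also have "norm G0 * norm (w + blinfun_apply (F0 - F) ?v) \<le> norm G0 * (norm w + norm (F0 - F) * norm ?v)"
    by (intro mult_left_mono norm_triangle_le add_left_mono norm_blinfun) auto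
  also have "\<dots> \<le> norm G0 * norm w + norm ?v / 2"
    using mult_right_mono[OF close, of "norm ?v"] by (simp add: algebra_simps)
  finally show "norm ?v \<le> 2 * norm G0 * norm w" by simp
qed simp

lemma continuous_on_blinfun_inverse:
  fixes F G :: "'b::metric_space \<Rightarrow> ('a::real_normed_vector \<Rightarrow>\<^sub>L 'a)"
  assumes contF: "continuous_on S F"
    and GF: "\<And>s. s \<in> S \<Longrightarrow> G s o\<^sub>L F s = id_blinfun"
    and FG: "\<And>s. s \<in> S \<Longrightarrow> F s o\<^sub>L G s = id_blinfun"
  shows "continuous_on S G"
  unfolding continuous_on_def
proof (intro ballI)
  fix s0 assume "s0 \<in> S"
  let ?c = "norm (G s0)"
  have F: "(F \<longlongrightarrow> F s0) (at s0 within S)"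
    using contF \<open>s0 \<in> S\<close> by (simp add: continuous_on_def)
  then have "\<forall>\<^sub>F s in at s0 within S. dist (F s) (F s0) < 1 / (2 * (?c + 1))"
    by (rule tendstoD) (simp add: add_nonneg_pos)
  moreover have "\<forall>\<^sub>F s in at s0 within S. s \<in> S"
    by (simp add: eventually_at_filter)
  ultimately have "\<forall>\<^sub>F s in at s0 within S. norm (G s - G s0) \<le> 2 * ?c * ?c * norm (F s - F s0)"
  proof eventually_elim
    case (elim s)
    have "?c + 1 > 0" by (simp add: add_nonneg_pos)
    have "norm (F s0 - F s) * ?c \<le> 1 / (2 * (?c + 1)) * (?c + 1)"
      using elim(1) by (intro mult_mono) (auto simp: dist_norm norm_minus_commute)
    also have "\<dots> = 1 / 2" using \<open>?c + 1 > 0\<close> by (simp add: field_simps)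
    finally have "norm (G s) \<le> 2 * ?c"
      by (rule norm_blinfun_inverse_le_twice[OF GF[OF \<open>s0 \<in> S\<close>] FG[OF elim(2)]])
    have "blinfun_apply (G s) (blinfun_apply (F s) v) = v" for v
      using GF[OF elim(2)] by (metis blinfun_apply_blinfun_compose blinfun_apply_id_blinfun)
    moreover have "blinfun_apply (F s0) (blinfun_apply (G s0) v) = v" for v
      using FG[OF \<open>s0 \<in> S\<close>] by (metis blinfun_apply_blinfun_compose blinfun_apply_id_blinfun)
    ultimately have "G s - G s0 = G s o\<^sub>L (F s0 - F s) o\<^sub>L G s0"
      by (intro blinfun_eqI) (simp add: blinfun.diff_left blinfun.diff_right)
    then have "norm (G s - G s0) \<le> norm (G s o\<^sub>L (F s0 - F s)) * ?c"
      by (simp add: norm_blinfun_compose)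
    also have "\<dots> \<le> norm (G s) * norm (F s0 - F s) * ?c"
      by (intro mult_right_mono norm_blinfun_compose) simp
    also have "\<dots> \<le> 2 * ?c * norm (F s0 - F s) * ?c"
      using \<open>norm (G s) \<le> 2 * ?c\<close> by (intro mult_right_mono) auto
    finally show ?case by (simp add: norm_minus_commute mult_ac)
  qed
  moreover have "((\<lambda>s. 2 * ?c * ?c * norm (F s - F s0)) \<longlongrightarrow> 0) (at s0 within S)"
    using F by (auto intro!: tendsto_eq_intros simp: Lim_null[of F])
  ultimately have "((\<lambda>s. G s - G s0) \<longlongrightarrow> 0) (at s0 within S)"
    by (rule Lim_null_comparison)
  then show "(G \<longlongrightarrow> G s0) (at s0 within S)"
    by (simp add: Lim_null[symmetric])
qed

section \<open>Local inverses and lifts of paths\<close>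

lemma C1_with_imp_continuous_on: "C1_with f f' \<Longrightarrow> continuous_on S f"
  unfolding C1_with_def by (meson continuous_at_imp_continuous_on has_derivative_continuous)

lemma bounded_linear_inv_blinfun:
  fixes F :: "'a::euclidean_space \<Rightarrow>\<^sub>L 'a"
  assumes "bij (blinfun_apply F)"
  shows "bounded_linear (inv (blinfun_apply F))"
  using assms by (simp add: bij_is_inj inj_linear_imp_inv_bounded_linear blinfun.bounded_linear_right)

lemma C1_local_inverse:
  fixes f :: "'a::euclidean_space \<Rightarrow> 'a"
  assumes "C1_with f f'" and "bij (blinfun_apply (f' x))"
  obtains U V h where "open U" "x \<in> U" "open V" "homeomorphism U V f h"
    "\<And>y. y \<in> V \<Longrightarrow> (h has_derivative inv (blinfun_apply (f' (h y)))) (at y)"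
proof -
  have "Blinfun (inv (blinfun_apply (f' x))) o\<^sub>L f' x = id_blinfun"
    using assms(2) by (intro blinfun_eqI)
      (simp add: bounded_linear_inv_blinfun bounded_linear_Blinfun_apply bij_is_inj)
  from inverse_function_theorem[of UNIV f f' x, OF _ _ _ _ this] assms(1) that show ?thesis
    unfolding C1_with_def by (metis UNIV_I open_UNIV)
qed

lemma has_derivative_lift:
  fixes f :: "'a::euclidean_space \<Rightarrow> 'a" and \<gamma> :: "'b::real_normed_vector \<Rightarrow> 'a"
  assumes C1f: "C1_with f f'" and bij: "bij (blinfun_apply (f' (\<gamma> \<tau>)))"
    and \<gamma>: "continuous_on S \<gamma>" and "\<tau> \<in> S" and p: "(p has_derivative p') (at \<tau> within S)"
    and lift: "\<And>s. s \<in> S \<Longrightarrow> f (\<gamma> s) = p s"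
  shows "(\<gamma> has_derivative (\<lambda>v. inv (blinfun_apply (f' (\<gamma> \<tau>))) (p' v))) (at \<tau> within S)"
proof -
  obtain U V h where "open U" "\<gamma> \<tau> \<in> U" "open V" and hom: "homeomorphism U V f h"
    and h': "\<And>y. y \<in> V \<Longrightarrow> (h has_derivative inv (blinfun_apply (f' (h y)))) (at y)"
    using C1_local_inverse[OF C1f bij] by metis
  have hf: "\<And>x. x \<in> U \<Longrightarrow> h (f x) = x"
    using hom by (rule homeomorphism_apply1)
  have "p \<tau> \<in> V" "h (p \<tau>) = \<gamma> \<tau>"
    using homeomorphism_image1[OF hom] hf \<open>\<gamma> \<tau> \<in> U\<close> lift[OF \<open>\<tau> \<in> S\<close>, symmetric] by auto
  have "((\<lambda>s. h (p s)) has_derivative (\<lambda>v. inv (blinfun_apply (f' (\<gamma> \<tau>))) (p' v))) (at \<tau> within S)"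
    using has_derivative_compose[OF p h'[OF \<open>p \<tau> \<in> V\<close>]] unfolding \<open>h (p \<tau>) = \<gamma> \<tau>\<close> .
  moreover have "\<forall>\<^sub>F s in at \<tau> within S. h (p s) = \<gamma> s"
  proof -
    have "(\<gamma> \<longlongrightarrow> \<gamma> \<tau>) (at \<tau> within S)"
      using \<gamma> \<open>\<tau> \<in> S\<close> by (simp add: continuous_on_def)
    then have "\<forall>\<^sub>F s in at \<tau> within S. \<gamma> s \<in> U"
      using \<open>open U\<close> \<open>\<gamma> \<tau> \<in> U\<close> by (rule topological_tendstoD)
    moreover have "\<forall>\<^sub>F s in at \<tau> within S. s \<in> S"
      by (simp add: eventually_at_filter)
    ultimately show ?thesis
      by eventually_elim (metis hf lift)
  qed
  ultimately show ?thesis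
    using \<open>h (p \<tau>) = \<gamma> \<tau>\<close> \<open>\<tau> \<in> S\<close> by (rule has_derivative_transform_eventually)
qed

lemma lift_variation_bound:
  fixes f :: "'a::euclidean_space \<Rightarrow> 'a" and k :: "'a \<Rightarrow> real"
  assumes C1f: "C1_with f f'" and bij: "\<And>x. bij (blinfun_apply (f' x))" and C1k: "C1_with k k'"
    and M: "\<And>x. onorm (blinfun_apply (k' x) \<circ> inv (blinfun_apply (f' x))) \<le> M"
    and \<gamma>: "continuous_on {0..r} \<gamma>" and lift: "\<And>s. s \<in> {0..r} \<Longrightarrow> f (\<gamma> s) = a + s *\<^sub>R w"
    and "0 \<le> r"
  shows "\<bar>k (\<gamma> r) - k (\<gamma> 0)\<bar> \<le> M * norm w * r"
proof -
  let ?D = "\<lambda>\<tau> d. blinfun_apply (k' (\<gamma> \<tau>)) (inv (blinfun_apply (f' (\<gamma> \<tau>))) (d *\<^sub>R w))"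
  have "((\<lambda>s. k (\<gamma> s)) has_derivative ?D \<tau>) (at \<tau> within {0..r})" if "\<tau> \<in> {0..r}" for \<tau>
  proof -
    have "((\<lambda>s. a + s *\<^sub>R w) has_derivative (\<lambda>d. d *\<^sub>R w)) (at \<tau> within {0..r})"
      by (auto intro!: derivative_eq_intros)
    then have "(\<gamma> has_derivative (\<lambda>d. inv (blinfun_apply (f' (\<gamma> \<tau>))) (d *\<^sub>R w))) (at \<tau> within {0..r})"
      by (rule has_derivative_lift[OF C1f bij \<gamma> that]) (use lift in auto)
    moreover have "(k has_derivative blinfun_apply (k' (\<gamma> \<tau>))) (at (\<gamma> \<tau>))"
      using C1k unfolding C1_with_def by blast
    ultimately show ?thesis by (rule has_derivative_compose)
  qed
  moreover have "onorm (?D \<tau>) \<le> M * norm w" for \<tau>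
  proof (rule onorm_le)
    fix d :: real
    have bl: "bounded_linear (blinfun_apply (k' (\<gamma> \<tau>)) \<circ> inv (blinfun_apply (f' (\<gamma> \<tau>))))"
      unfolding o_def
      by (rule bounded_linear_compose[OF blinfun.bounded_linear_right bounded_linear_inv_blinfun[OF bij]])
    have "norm (?D \<tau> d) \<le> onorm (blinfun_apply (k' (\<gamma> \<tau>)) \<circ> inv (blinfun_apply (f' (\<gamma> \<tau>)))) * norm (d *\<^sub>R w)"
      using onorm[OF bl, of "d *\<^sub>R w"] by simp
    also have "\<dots> \<le> M * norm (d *\<^sub>R w)"
      by (rule mult_right_mono[OF M norm_ge_zero])
    finally show "norm (?D \<tau> d) \<le> M * norm w * norm d" by (simp add: mult_ac)
  qed
  ultimately have "norm (k (\<gamma> r) - k (\<gamma> 0)) \<le> M * norm w * norm (r - 0)"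
    using \<open>0 \<le> r\<close> by (intro differentiable_bound[where f'="?D" and S="{0..r}"]) auto
  then show ?thesis using \<open>0 \<le> r\<close> by simp
qed

lemma coercive_sublevel_compact:
  fixes k :: "'a::euclidean_space \<Rightarrow> real"
  assumes "coercive k"
  shows "compact {x. k x \<le> K}"
proof -
  obtain b where b: "\<And>x. b \<le> norm x \<Longrightarrow> K + 1 \<le> k x"
    using assms unfolding coercive_def filterlim_at_top eventually_at_infinity by blast
  have "norm x \<le> b" if "k x \<le> K" for x
    using b[of x] that by (cases "b \<le> norm x") auto
  then have "{x. k x \<le> K} \<subseteq> cball 0 b" by auto
  then have "bounded {x. k x \<le> K}" by (rule bounded_subset[OF bounded_cball])
  moreover have "closed {x. k x \<le> K}"
    using assms unfolding coercive_def by (intro closed_Collect_le continuous_on_const) auto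
  ultimately show ?thesis by (simp add: compact_eq_bounded_closed)
qed

section \<open>Lifting families of segments\<close>

definition lifts_segment :: "('a::real_normed_vector \<Rightarrow> 'a) \<Rightarrow> 'a \<Rightarrow> 'a \<Rightarrow> real \<Rightarrow> (real \<Rightarrow> 'a) \<Rightarrow> bool" where
  "lifts_segment f x0 y r \<gamma> \<longleftrightarrow>
     continuous_on {0..r} \<gamma> \<and> \<gamma> 0 = x0 \<and> (\<forall>s\<in>{0..r}. f (\<gamma> s) = f x0 + s *\<^sub>R (y - f x0))"

definition lifts_segments_on ::
    "('a::real_normed_vector \<Rightarrow> 'a) \<Rightarrow> 'a \<Rightarrow> 'a set \<Rightarrow> real \<Rightarrow> ('a \<Rightarrow> real \<Rightarrow> 'a) \<Rightarrow> bool" where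
  "lifts_segments_on f x0 N r \<Phi> \<longleftrightarrow>
     continuous_on (N \<times> {0..r}) (case_prod \<Phi>) \<and>
     (\<forall>y\<in>N. \<Phi> y 0 = x0 \<and> (\<forall>s\<in>{0..r}. f (\<Phi> y s) = f x0 + s *\<^sub>R (y - f x0)))"

lemma lifts_segments_on_lifts_segment:
  "lifts_segments_on f x0 N r \<Phi> \<Longrightarrow> y \<in> N \<Longrightarrow> lifts_segment f x0 y r (\<Phi> y)"
  unfolding lifts_segments_on_def lifts_segment_def by (auto intro: continuous_on_case_prod_fix_fst)

lemma lifts_segments_on_subset:
  assumes "lifts_segments_on f x0 N r \<Phi>" "N' \<subseteq> N" "r' \<le> r"
  shows "lifts_segments_on f x0 N' r' \<Phi>"
proof -
  have "N' \<times> {0..r'} \<subseteq> N \<times> {0..r}" using assms(2,3) by auto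
  then show ?thesis
    using assms unfolding lifts_segments_on_def by (auto elim: continuous_on_subset)
qed

lemma lifts_segments_on_glue:
  fixes f :: "'a::real_normed_vector \<Rightarrow> 'a"
  assumes lift: "lifts_segments_on f x0 N \<rho> \<Phi>" and "0 \<le> \<rho>" and "N' \<subseteq> N"
    and hom: "homeomorphism U V f h" and in_U: "\<And>y. y \<in> N' \<Longrightarrow> \<Phi> y \<rho> \<in> U"
    and in_V: "\<And>y r. y \<in> N' \<Longrightarrow> \<rho> \<le> r \<Longrightarrow> r \<le> u \<Longrightarrow> f x0 + r *\<^sub>R (y - f x0) \<in> V"
  shows "lifts_segments_on f x0 N' u (\<lambda>y r. if r \<le> \<rho> then \<Phi> y r else h (f x0 + r *\<^sub>R (y - f x0)))"
proof -
  let ?\<sigma> = "\<lambda>y r. f x0 + r *\<^sub>R (y - f x0)"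
  have cont: "continuous_on (N \<times> {0..\<rho>}) (\<lambda>p. \<Phi> (fst p) (snd p))"
    and \<Phi>0: "\<And>y. y \<in> N \<Longrightarrow> \<Phi> y 0 = x0"
    and \<Phi>f: "\<And>y r. y \<in> N \<Longrightarrow> r \<in> {0..\<rho>} \<Longrightarrow> f (\<Phi> y r) = ?\<sigma> y r"
    using lift unfolding lifts_segments_on_def case_prod_unfold by auto
  have "continuous_on (N' \<times> {0..u})
      (\<lambda>p. if snd p \<le> \<rho> then \<Phi> (fst p) (snd p) else h (?\<sigma> (fst p) (snd p)))"
  proof (rule continuous_on_cases_le)
    show "continuous_on {p \<in> N' \<times> {0..u}. snd p \<le> \<rho>} (\<lambda>p. \<Phi> (fst p) (snd p))"
      by (rule continuous_on_subset[OF cont]) (use \<open>N' \<subseteq> N\<close> in auto)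
    show "continuous_on {p \<in> N' \<times> {0..u}. \<rho> \<le> snd p} (\<lambda>p. h (?\<sigma> (fst p) (snd p)))"
      by (rule continuous_on_compose2[OF homeomorphism_cont2[OF hom]])
        (auto intro!: continuous_intros in_V)
    show "continuous_on (N' \<times> {0..u}) snd"
      by (intro continuous_intros)
  next
    fix p assume "p \<in> N' \<times> {0..u}" "snd p = \<rho>"
    then show "\<Phi> (fst p) (snd p) = h (?\<sigma> (fst p) (snd p))"
      using \<Phi>f[of "fst p" \<rho>] \<open>0 \<le> \<rho>\<close> \<open>N' \<subseteq> N\<close> homeomorphism_apply1[OF hom in_U, of "fst p"]
      by auto
  qed
  moreover have "f (h (?\<sigma> y r)) = ?\<sigma> y r" if "y \<in> N'" "\<rho> \<le> r" "r \<le> u" for y r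
    using homeomorphism_apply2[OF hom in_V[OF that]] .
  ultimately show ?thesis
    using \<Phi>0 \<Phi>f \<open>0 \<le> \<rho>\<close> \<open>N' \<subseteq> N\<close> unfolding lifts_segments_on_def case_prod_unfold
    by (auto simp: not_le less_imp_le)
qed

lemma dist_points_on_segments_le:
  fixes a y y1 :: "'a::real_normed_vector"
  assumes "0 \<le> r"
  shows "dist (a + t *\<^sub>R (y1 - a)) (a + r *\<^sub>R (y - a)) \<le> r * dist y y1 + \<bar>r - t\<bar> * norm (y1 - a)"
proof -
  have "dist (a + t *\<^sub>R (y1 - a)) (a + r *\<^sub>R (y - a)) = norm ((a + r *\<^sub>R (y - a)) - (a + t *\<^sub>R (y1 - a)))"
    by (simp add: dist_norm norm_minus_commute)
  also have "(a + r *\<^sub>R (y - a)) - (a + t *\<^sub>R (y1 - a)) = r *\<^sub>R (y - y1) + (r - t) *\<^sub>R (y1 - a)"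
    by (simp add: algebra_simps)
  also have "norm \<dots> \<le> norm (r *\<^sub>R (y - y1)) + norm ((r - t) *\<^sub>R (y1 - a))"
    by (rule norm_triangle_ineq)
  also have "\<dots> = r * dist y y1 + \<bar>r - t\<bar> * norm (y1 - a)"
    using assms by (simp add: dist_norm)
  finally show ?thesis .
qed

lemma lifts_segments_on_extend:
  fixes f :: "'a::real_normed_vector \<Rightarrow> 'a"
  assumes lift: "lifts_segments_on f x0 N \<rho> \<Phi>" and "open N" "y1 \<in> N" "0 \<le> \<rho>" "\<rho> \<le> t"
    and "open U" and hom: "homeomorphism U V f h" and "\<Phi> y1 \<rho> \<in> U"
    and "0 < \<delta>" and ball: "ball (f x0 + t *\<^sub>R (y1 - f x0)) \<delta> \<subseteq> V"
    and near: "(t - \<rho>) * norm (y1 - f x0) < \<delta> / 4"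
  shows "\<exists>u>t. \<exists>N' \<Psi>. open N' \<and> y1 \<in> N' \<and> lifts_segments_on f x0 N' u \<Psi>"
proof -
  let ?\<sigma> = "\<lambda>y r. f x0 + r *\<^sub>R (y - f x0)"
  let ?n = "norm (y1 - f x0)"
  define e where "e = min 1 (\<delta> / (4 * (?n + 1)))"
  define N' where "N' = N \<inter> (\<lambda>y. \<Phi> y \<rho>) -` U \<inter> ball y1 (\<delta> / (2 * (t + 2)))"
  have "?n + 1 > 0" by (simp add: add_nonneg_pos)
  then have "0 < e" "e \<le> 1" using \<open>0 < \<delta>\<close> by (auto simp: e_def)
  have "e * ?n \<le> \<delta> / (4 * (?n + 1)) * ?n"
    unfolding e_def by (intro mult_right_mono) auto
  also have "\<dots> < \<delta> / 4"
    using \<open>?n + 1 > 0\<close> \<open>0 < \<delta>\<close> by (simp add: field_simps)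
  finally have "e * ?n < \<delta> / 4" .
  have "continuous_on N (\<lambda>y. \<Phi> y \<rho>)"
    using lift \<open>0 \<le> \<rho>\<close> unfolding lifts_segments_on_def by (auto intro: continuous_on_case_prod_fix_snd)
  then have "open N'"
    unfolding N'_def using \<open>open N\<close> \<open>open U\<close> by (intro open_Int continuous_open_preimage) auto
  have "y1 \<in> N'"
    unfolding N'_def using \<open>y1 \<in> N\<close> \<open>\<Phi> y1 \<rho> \<in> U\<close> \<open>0 < \<delta>\<close> \<open>0 \<le> \<rho>\<close> \<open>\<rho> \<le> t\<close> by auto
  have in_V: "?\<sigma> y r \<in> V" if "y \<in> N'" "\<rho> \<le> r" "r \<le> t + e" for y r
  proof -
    have "dist y y1 \<le> \<delta> / (2 * (t + 2))"
      using that(1) by (simp add: N'_def dist_commute)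
    then have "r * dist y y1 \<le> (t + 2) * (\<delta> / (2 * (t + 2)))"
      using that \<open>0 \<le> \<rho>\<close> \<open>e \<le> 1\<close> by (intro mult_mono) auto
    also have "\<dots> = \<delta> / 2" using \<open>0 \<le> \<rho>\<close> \<open>\<rho> \<le> t\<close> by (simp add: field_simps)
    finally have "r * dist y y1 \<le> \<delta> / 2" .
    moreover have "\<bar>r - t\<bar> * ?n < \<delta> / 4"
    proof (cases "r \<le> t")
      case True
      then have "\<bar>r - t\<bar> * ?n \<le> (t - \<rho>) * ?n" using that by (intro mult_right_mono) auto
      then show ?thesis using near by linarith
    next
      case False
      then have "\<bar>r - t\<bar> * ?n \<le> e * ?n" using that by (intro mult_right_mono) auto
      then show ?thesis using \<open>e * ?n < \<delta> / 4\<close> by linarith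
    qed
    moreover have "dist (?\<sigma> y1 t) (?\<sigma> y r) \<le> r * dist y y1 + \<bar>r - t\<bar> * ?n"
      using that \<open>0 \<le> \<rho>\<close> by (intro dist_points_on_segments_le) auto
    ultimately have "dist (?\<sigma> y1 t) (?\<sigma> y r) < \<delta>"
      using \<open>0 < \<delta>\<close> by linarith
    then show ?thesis using ball by auto
  qed
  have "lifts_segments_on f x0 N' (t + e)
      (\<lambda>y r. if r \<le> \<rho> then \<Phi> y r else h (?\<sigma> y r))"
    by (rule lifts_segments_on_glue[OF lift \<open>0 \<le> \<rho>\<close> _ hom _ in_V]) (auto simp: N'_def)
  then show ?thesis
    using \<open>open N'\<close> \<open>y1 \<in> N'\<close> \<open>0 < e\<close> by (intro exI[of _ "t + e"]) auto
qed

lemma lifts_segments_limit_point: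
  fixes f :: "'a::real_normed_vector \<Rightarrow> 'a"
  assumes contf: "continuous_on UNIV f" and "compact C" and "0 < t"
    and lifts: "\<And>s. 0 \<le> s \<Longrightarrow> s < t \<Longrightarrow>
      \<exists>N \<Phi>. open N \<and> y1 \<in> N \<and> lifts_segments_on f x0 N s \<Phi> \<and> \<Phi> y1 s \<in> C"
  obtains l where "f l = f x0 + t *\<^sub>R (y1 - f x0)"
    and "\<And>U \<eta>. open U \<Longrightarrow> l \<in> U \<Longrightarrow> 0 < \<eta> \<Longrightarrow>
      \<exists>\<rho> N \<Phi>. 0 \<le> \<rho> \<and> \<rho> \<le> t \<and> t - \<rho> < \<eta> \<and> open N \<and> y1 \<in> N \<and>
        lifts_segments_on f x0 N \<rho> \<Phi> \<and> \<Phi> y1 \<rho> \<in> U"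
proof -
  define \<rho> where "\<rho> = (\<lambda>n. t - t / real (Suc (Suc n)))"
  have \<rho>: "0 \<le> \<rho> n" "\<rho> n < t" for n
    using \<open>0 < t\<close> by (auto simp: \<rho>_def field_simps)
  have "(\<lambda>n. t / real (Suc (Suc n))) \<longlonglongrightarrow> 0"
    using LIMSEQ_Suc[OF LIMSEQ_Suc[OF lim_const_over_n[of t]]] by simp
  then have "(\<lambda>n. t - t / real (Suc (Suc n))) \<longlonglongrightarrow> t - 0"
    by (intro tendsto_intros)
  then have "\<rho> \<longlonglongrightarrow> t" unfolding \<rho>_def by simp
  obtain N \<Phi> where N\<Phi>: "\<And>n. open (N n) \<and> y1 \<in> N n \<and>
      lifts_segments_on f x0 (N n) (\<rho> n) (\<Phi> n) \<and> \<Phi> n y1 (\<rho> n) \<in> C"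
    using lifts[OF \<rho>] by metis
  define z where "z n = \<Phi> n y1 (\<rho> n)" for n
  obtain l \<phi> where "strict_mono \<phi>" and zl: "(z \<circ> \<phi>) \<longlonglongrightarrow> l"
    using \<open>compact C\<close> N\<Phi> unfolding compact_def z_def by metis
  have \<rho>\<phi>: "(\<rho> \<circ> \<phi>) \<longlonglongrightarrow> t"
    using LIMSEQ_subseq_LIMSEQ[OF \<open>\<rho> \<longlonglongrightarrow> t\<close> \<open>strict_mono \<phi>\<close>] .
  have fz: "f (z n) = f x0 + \<rho> n *\<^sub>R (y1 - f x0)" for n
    using N\<Phi>[of n] \<rho>[of n] unfolding lifts_segments_on_def z_def by auto
  have "(\<lambda>n. f ((z \<circ> \<phi>) n)) \<longlonglongrightarrow> f l"
    by (rule continuous_on_tendsto_compose[OF contf zl]) auto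
  moreover have "(\<lambda>n. f ((z \<circ> \<phi>) n)) \<longlonglongrightarrow> f x0 + t *\<^sub>R (y1 - f x0)"
    unfolding comp_def fz using \<rho>\<phi> by (auto intro!: tendsto_intros simp: comp_def)
  ultimately have "f l = f x0 + t *\<^sub>R (y1 - f x0)"
    by (rule LIMSEQ_unique)
  moreover have "\<exists>\<rho> N \<Phi>. 0 \<le> \<rho> \<and> \<rho> \<le> t \<and> t - \<rho> < \<eta> \<and> open N \<and> y1 \<in> N \<and>
      lifts_segments_on f x0 N \<rho> \<Phi> \<and> \<Phi> y1 \<rho> \<in> U"
    if "open U" "l \<in> U" "0 < \<eta>" for U \<eta>
  proof -
    have "\<forall>\<^sub>F n in sequentially. (z \<circ> \<phi>) n \<in> U"
      using zl \<open>open U\<close> \<open>l \<in> U\<close> by (rule topological_tendstoD)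
    moreover have "\<forall>\<^sub>F n in sequentially. t - \<eta> < (\<rho> \<circ> \<phi>) n"
      using \<rho>\<phi> by (rule order_tendstoD) (use \<open>0 < \<eta>\<close> in simp)
    ultimately obtain n where "z (\<phi> n) \<in> U" "t - \<eta> < \<rho> (\<phi> n)"
      by (metis (mono_tags, lifting) comp_apply eventually_conj_iff eventually_sequentially order_refl)
    then show ?thesis
      using N\<Phi>[of "\<phi> n"] \<rho>[of "\<phi> n"] unfolding z_def by (intro exI[of _ "\<rho> (\<phi> n)"]) auto
  qed
  ultimately show ?thesis using that by blast
qed

lemma lifts_segments_on_step:
  fixes f :: "'a::real_normed_vector \<Rightarrow> 'a"
  assumes contf: "continuous_on UNIV f"
    and local_homeo: "\<And>x. \<exists>U V h. open U \<and> x \<in> U \<and> open V \<and> homeomorphism U V f h"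
    and "compact C" and bounded: "\<And>\<gamma> r. 0 \<le> r \<Longrightarrow> r < t \<Longrightarrow> lifts_segment f x0 y1 r \<gamma> \<Longrightarrow> \<gamma> r \<in> C"
    and "0 \<le> t"
    and IH: "\<And>s. 0 \<le> s \<Longrightarrow> s < t \<Longrightarrow> \<exists>N \<Phi>. open N \<and> y1 \<in> N \<and> lifts_segments_on f x0 N s \<Phi>"
  shows "\<exists>u>t. \<exists>N \<Phi>. open N \<and> y1 \<in> N \<and> lifts_segments_on f x0 N u \<Phi>"
proof -
  let ?\<sigma> = "f x0 + t *\<^sub>R (y1 - f x0)" and ?n = "norm (y1 - f x0)"
  obtain l where fl: "f l = ?\<sigma>"
    and near_l: "\<And>U \<eta>. open U \<Longrightarrow> l \<in> U \<Longrightarrow> 0 < \<eta> \<Longrightarrow>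
      \<exists>\<rho> N \<Phi>. 0 \<le> \<rho> \<and> \<rho> \<le> t \<and> t - \<rho> < \<eta> \<and> open N \<and> y1 \<in> N \<and>
        lifts_segments_on f x0 N \<rho> \<Phi> \<and> \<Phi> y1 \<rho> \<in> U"
  proof (cases "t = 0")
    case True
    have "lifts_segments_on f x0 UNIV 0 (\<lambda>_ _. x0)"
      by (simp add: lifts_segments_on_def)
    with True show ?thesis
      by (intro that[of x0]) (auto intro!: exI[of _ 0] exI[of _ UNIV])
  next
    case False
    have lifts: "\<exists>N \<Phi>. open N \<and> y1 \<in> N \<and> lifts_segments_on f x0 N s \<Phi> \<and> \<Phi> y1 s \<in> C"
      if "0 \<le> s" "s < t" for s
      using IH[OF that] bounded[OF that lifts_segments_on_lifts_segment] by blast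
    from False \<open>0 \<le> t\<close> have "0 < t" by simp
    show ?thesis
      using lifts that by (rule lifts_segments_limit_point[OF contf \<open>compact C\<close> \<open>0 < t\<close>])
  qed
  obtain U V h where "open U" "l \<in> U" "open V" and hom: "homeomorphism U V f h"
    using local_homeo by blast
  have "?\<sigma> \<in> V"
    using homeomorphism_image1[OF hom] \<open>l \<in> U\<close> fl[symmetric] by blast
  then obtain \<delta> where "0 < \<delta>" and ball: "ball ?\<sigma> \<delta> \<subseteq> V"
    using \<open>open V\<close> open_contains_ball by blast
  have "?n + 1 > 0" by (simp add: add_nonneg_pos)
  then obtain \<rho> N \<Phi> where "0 \<le> \<rho>" "\<rho> \<le> t" and close: "t - \<rho> < \<delta> / (4 * (?n + 1))"
    and "open N" "y1 \<in> N" and lift: "lifts_segments_on f x0 N \<rho> \<Phi>" and "\<Phi> y1 \<rho> \<in> U"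
    using near_l[OF \<open>open U\<close> \<open>l \<in> U\<close>, of "\<delta> / (4 * (?n + 1))"] \<open>0 < \<delta>\<close> by auto
  have "(t - \<rho>) * ?n \<le> (t - \<rho>) * (?n + 1)"
    using \<open>\<rho> \<le> t\<close> by (intro mult_left_mono) auto
  also have "\<dots> < \<delta> / 4"
    using close \<open>?n + 1 > 0\<close> by (simp add: field_simps)
  finally show ?thesis
    by (rule lifts_segments_on_extend[OF lift \<open>open N\<close> \<open>y1 \<in> N\<close> \<open>0 \<le> \<rho>\<close> \<open>\<rho> \<le> t\<close>
          \<open>open U\<close> hom \<open>\<Phi> y1 \<rho> \<in> U\<close> \<open>0 < \<delta>\<close> ball])
qed

lemma lifts_segments_exist:
  fixes f :: "'a::real_normed_vector \<Rightarrow> 'a"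
  assumes contf: "continuous_on UNIV f"
    and local_homeo: "\<And>x. \<exists>U V h. open U \<and> x \<in> U \<and> open V \<and> homeomorphism U V f h"
    and bounded: "\<And>t. \<exists>C. compact C \<and>
      (\<forall>\<gamma> r. 0 \<le> r \<longrightarrow> r \<le> t \<longrightarrow> lifts_segment f x0 y1 r \<gamma> \<longrightarrow> \<gamma> r \<in> C)"
    and "0 \<le> t"
  shows "\<exists>N \<Phi>. open N \<and> y1 \<in> N \<and> lifts_segments_on f x0 N t \<Phi>"
proof (rule real_induct_downward_closed[where P="\<lambda>t. \<exists>N \<Phi>. open N \<and> y1 \<in> N \<and> lifts_segments_on f x0 N t \<Phi>"])
  show "0 \<le> t" by fact
next
  fix s t :: real
  assume "s \<le> t" and "\<exists>N \<Phi>. open N \<and> y1 \<in> N \<and> lifts_segments_on f x0 N t \<Phi>"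
  then show "\<exists>N \<Phi>. open N \<and> y1 \<in> N \<and> lifts_segments_on f x0 N s \<Phi>"
    by (meson lifts_segments_on_subset order_refl)
next
  fix t :: real
  assume "0 \<le> t" and "\<And>s. 0 \<le> s \<Longrightarrow> s < t \<Longrightarrow> \<exists>N \<Phi>. open N \<and> y1 \<in> N \<and> lifts_segments_on f x0 N s \<Phi>"
  moreover obtain C where "compact C"
    and "\<And>\<gamma> r. 0 \<le> r \<Longrightarrow> r \<le> t \<Longrightarrow> lifts_segment f x0 y1 r \<gamma> \<Longrightarrow> \<gamma> r \<in> C"
    using bounded[of t] by blast
  ultimately show "\<exists>u>t. \<exists>N \<Phi>. open N \<and> y1 \<in> N \<and> lifts_segments_on f x0 N u \<Phi>"
    by (intro lifts_segments_on_step[OF contf local_homeo \<open>compact C\<close>]) auto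
qed

section \<open>The diffeomorphism criterion\<close>

lemma continuous_right_inverse_of_lifts:
  fixes f :: "'a::real_normed_vector \<Rightarrow> 'a"
  assumes locally_inj: "\<And>x. \<exists>U. open U \<and> x \<in> U \<and> inj_on f U"
    and lifts: "\<And>y. \<exists>N \<Phi>. open N \<and> y \<in> N \<and> lifts_segments_on f x0 N 1 \<Phi>"
  obtains g where "continuous_on UNIV g" "\<And>y. f (g y) = y"
proof -
  define \<gamma>\<^sub>0 where "\<gamma>\<^sub>0 y = (SOME \<gamma>. lifts_segment f x0 y 1 \<gamma>)" for y
  have lift_\<gamma>\<^sub>0: "lifts_segment f x0 y 1 (\<gamma>\<^sub>0 y)" for y
  proof -
    obtain N \<Phi> where "y \<in> N" "lifts_segments_on f x0 N 1 \<Phi>"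
      using lifts by blast
    then have "lifts_segment f x0 y 1 (\<Phi> y)"
      by (intro lifts_segments_on_lifts_segment)
    then show ?thesis
      unfolding \<gamma>\<^sub>0_def by (rule someI[of "lifts_segment f x0 y 1"])
  qed
  have unique: "\<gamma> 1 = \<gamma>\<^sub>0 y 1" if \<gamma>: "lifts_segment f x0 y 1 \<gamma>" for y \<gamma>
    by (rule eq_on_connected_if_locally_injective[OF locally_inj connected_Icc[of 0 "1::real"], where a=0])
      (use \<gamma> lift_\<gamma>\<^sub>0[of y] in \<open>auto simp: lifts_segment_def\<close>)
  have "continuous_on UNIV (\<lambda>y. \<gamma>\<^sub>0 y 1)"
  proof (rule continuous_at_imp_continuous_on, rule ballI)
    fix y1 :: 'a
    obtain N \<Phi> where "open N" "y1 \<in> N" and \<Phi>: "lifts_segments_on f x0 N 1 \<Phi>"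
      using lifts by blast
    have "continuous_on N (\<lambda>y. \<Phi> y 1)"
      using \<Phi> unfolding lifts_segments_on_def by (auto intro: continuous_on_case_prod_fix_snd)
    moreover have "\<Phi> y 1 = \<gamma>\<^sub>0 y 1" if "y \<in> N" for y
      by (rule unique[OF lifts_segments_on_lifts_segment[OF \<Phi> that]])
    ultimately have "continuous_on N (\<lambda>y. \<gamma>\<^sub>0 y 1)"
      by (rule continuous_on_eq)
    then show "isCont (\<lambda>y. \<gamma>\<^sub>0 y 1) y1"
      using \<open>open N\<close> \<open>y1 \<in> N\<close> continuous_on_eq_continuous_at by blast
  qed
  moreover have "f (\<gamma>\<^sub>0 y 1) = y" for y
    using lift_\<gamma>\<^sub>0[of y] by (simp add: lifts_segment_def)
  ultimately show ?thesis by (rule that)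
qed

lemma continuous_right_inverse_imp_left_inverse:
  fixes f g :: "'a::euclidean_space \<Rightarrow> 'a"
  assumes contf: "continuous_on UNIV f" and contg: "continuous_on UNIV g"
    and fg: "\<And>y. f (g y) = y"
  shows "g (f x) = x"
proof -
  have "open (range g)"
    by (rule invariance_of_domain[OF contg open_UNIV]) (metis fg inj_onI)
  moreover have range_eq: "range g = {x. g (f x) = x}"
  proof
    show "range g \<subseteq> {x. g (f x) = x}" using fg by auto
    show "{x. g (f x) = x} \<subseteq> range g" by (metis (mono_tags) mem_Collect_eq rangeI subsetI)
  qed
  moreover have "closed {x. g (f x) = x}"
    by (intro closed_Collect_eq continuous_on_compose2[OF contg contf] continuous_on_id) auto
  ultimately have "range g = UNIV"
    using connectedD[OF connected_UNIV, of "range g" "- range g"] by auto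
  then show ?thesis using range_eq by auto
qed

lemma C1_map_inverse:
  fixes f :: "'a::euclidean_space \<Rightarrow> 'a"
  assumes C1f: "C1_with f f'" and bij: "\<And>x. bij (blinfun_apply (f' x))"
    and contg: "continuous_on UNIV g" and gf: "\<And>x. g (f x) = x" and fg: "\<And>y. f (g y) = y"
  shows "C1_map g"
proof -
  define D where "D y = Blinfun (inv (blinfun_apply (f' (g y))))" for y
  have D: "blinfun_apply (D y) = inv (blinfun_apply (f' (g y)))" for y
    unfolding D_def using bounded_linear_inv_blinfun[OF bij] by (rule bounded_linear_Blinfun_apply)
  have "(g has_derivative blinfun_apply (D y)) (at y)" for y
  proof -
    have "(g has_derivative inv (blinfun_apply (f' (g y)))) (at (f (g y)))"
    proof (rule has_derivative_inverse_strong[of UNIV "g y" f g])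
      show "continuous_on UNIV f" using C1f by (rule C1_with_imp_continuous_on)
      show "(f has_derivative blinfun_apply (f' (g y))) (at (g y))"
        using C1f unfolding C1_with_def by blast
      show "blinfun_apply (f' (g y)) \<circ> inv (blinfun_apply (f' (g y))) = id"
        using bij by (simp add: fun_eq_iff bij_is_surj surj_f_inv_f)
    qed (auto simp: gf)
    then show ?thesis by (simp add: fg D)
  qed
  moreover have "continuous_on UNIV D"
  proof (rule continuous_on_blinfun_inverse)
    show "continuous_on UNIV (\<lambda>y. f' (g y))"
      using C1f unfolding C1_with_def by (intro continuous_on_compose2[OF _ contg]) auto
    fix y :: 'a
    show "D y o\<^sub>L f' (g y) = id_blinfun"
      by (rule blinfun_eqI) (use bij in \<open>simp add: D bij_is_inj\<close>)
    show "f' (g y) o\<^sub>L D y = id_blinfun"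
      by (rule blinfun_eqI) (use bij in \<open>simp add: D bij_is_surj surj_f_inv_f\<close>)
  qed
  ultimately show ?thesis unfolding C1_map_def C1_with_def by blast
qed

lemma global_diffeo_if_coercive_weight:
  fixes f :: "'a::euclidean_space \<Rightarrow> 'a" and k :: "'a \<Rightarrow> real"
  assumes C1f: "C1_with f f'" and bij: "\<forall>x. bij (blinfun_apply (f' x))"
    and C1k: "C1_with k k'" and "coercive k"
    and "bdd_above (range (\<lambda>x. onorm (blinfun_apply (k' x) \<circ> inv (blinfun_apply (f' x)))))"
  shows "global_diffeo f"
proof -
  obtain M where M: "\<And>x. onorm (blinfun_apply (k' x) \<circ> inv (blinfun_apply (f' x))) \<le> M"
    using assms(5) unfolding bdd_above_def by blast
  have contf: "continuous_on UNIV f"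
    using C1f by (rule C1_with_imp_continuous_on)
  have local_homeo: "\<exists>U V h. open U \<and> x \<in> U \<and> open V \<and> homeomorphism U V f h" for x
    using C1_local_inverse[OF C1f bij[rule_format, of x]] by metis
  have locally_inj: "\<exists>U. open U \<and> x \<in> U \<and> inj_on f U" for x
    using local_homeo[of x] unfolding homeomorphism_def by (metis inj_on_inverseI)
  have lifts: "\<exists>N \<Phi>. open N \<and> y \<in> N \<and> lifts_segments_on f 0 N 1 \<Phi>" for y
  proof (rule lifts_segments_exist[OF contf local_homeo _ zero_le_one])
    fix t
    let ?K = "k 0 + \<bar>M\<bar> * norm (y - f 0) * \<bar>t\<bar>"
    have "k (\<gamma> r) \<le> ?K" if "0 \<le> r" "r \<le> t" "lifts_segment f 0 y r \<gamma>" for \<gamma> r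
    proof -
      have "\<bar>k (\<gamma> r) - k (\<gamma> 0)\<bar> \<le> M * norm (y - f 0) * r"
        using that unfolding lifts_segment_def
        by (intro lift_variation_bound[OF C1f bij[rule_format] C1k M]) auto
      moreover have "M * norm (y - f 0) * r \<le> \<bar>M\<bar> * norm (y - f 0) * \<bar>t\<bar>"
        using that by (intro mult_mono) auto
      ultimately show ?thesis
        using that unfolding lifts_segment_def by auto
    qed
    then show "\<exists>C. compact C \<and> (\<forall>\<gamma> r. 0 \<le> r \<longrightarrow> r \<le> t \<longrightarrow> lifts_segment f 0 y r \<gamma> \<longrightarrow> \<gamma> r \<in> C)"
      using coercive_sublevel_compact[OF \<open>coercive k\<close>, of ?K] by blast
  qed
  obtain g where contg: "continuous_on UNIV g" and fg: "\<And>y. f (g y) = y"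
    using continuous_right_inverse_of_lifts[OF locally_inj lifts] by metis
  have gf: "\<And>x. g (f x) = x"
    by (rule continuous_right_inverse_imp_left_inverse[OF contf contg fg])
  have "C1_map g"
    by (rule C1_map_inverse[OF C1f bij[rule_format] contg gf fg])
  moreover have "C1_map f"
    using C1f unfolding C1_map_def by blast
  ultimately show ?thesis
    unfolding global_diffeo_def using gf fg by blast
qed

lemma global_diffeo_imp_bij_derivative:
  fixes f :: "'a::euclidean_space \<Rightarrow> 'a"
  assumes C1f: "C1_with f f'" and "global_diffeo f"
  shows "bij (blinfun_apply (f' x))"
proof -
  obtain g g' where gf: "\<And>x. g (f x) = x" and fg: "\<And>y. f (g y) = y" and C1g: "C1_with g g'"
    using assms(2) unfolding global_diffeo_def C1_map_def by blast
  have f': "(f has_derivative blinfun_apply (f' x)) (at x)" for x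
    using C1f unfolding C1_with_def by blast
  have g': "(g has_derivative blinfun_apply (g' y)) (at y)" for y
    using C1g unfolding C1_with_def by blast
  have "(\<lambda>v. blinfun_apply (g' (f x)) (blinfun_apply (f' x) v)) = (\<lambda>v. v)"
  proof (rule has_derivative_unique)
    show "((\<lambda>x. g (f x)) has_derivative (\<lambda>v. blinfun_apply (g' (f x)) (blinfun_apply (f' x) v))) (at x)"
      by (rule has_derivative_compose[OF f' g'])
    show "((\<lambda>x. g (f x)) has_derivative (\<lambda>v. v)) (at x)"
      unfolding gf by (rule has_derivative_ident)
  qed
  moreover have "(\<lambda>v. blinfun_apply (f' x) (blinfun_apply (g' (f x)) v)) = (\<lambda>v. v)"
  proof (rule has_derivative_unique)
    show "((\<lambda>y. f (g y)) has_derivative (\<lambda>v. blinfun_apply (f' x) (blinfun_apply (g' (f x)) v))) (at (f x))"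
      using has_derivative_compose[OF g' f', of "f x"] by (simp only: gf)
    show "((\<lambda>y. f (g y)) has_derivative (\<lambda>v. v)) (at (f x))"
      unfolding fg by (rule has_derivative_ident)
  qed
  ultimately show ?thesis
    by (metis bijI inj_on_inverseI surjI)
qed

lemma C1_with_sqrt_one_plus_inner:
  fixes f :: "'a::real_normed_vector \<Rightarrow> 'b::real_inner"
  assumes "C1_with f f'"
  shows "C1_with (\<lambda>x. sqrt (1 + f x \<bullet> f x))
    (\<lambda>x. inverse (sqrt (1 + f x \<bullet> f x)) *\<^sub>R (blinfun_inner_left (f x) o\<^sub>L f' x))"
proof -
  have f': "(f has_derivative blinfun_apply (f' x)) (at x)" for x
    using assms unfolding C1_with_def by blast
  have pos: "0 < 1 + f x \<bullet> f x" for x by (simp add: add_pos_nonneg)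
  have "((\<lambda>x. sqrt (1 + f x \<bullet> f x)) has_derivative
      blinfun_apply (inverse (sqrt (1 + f x \<bullet> f x)) *\<^sub>R (blinfun_inner_left (f x) o\<^sub>L f' x))) (at x)" for x
  proof -
    have "((\<lambda>x. 1 + f x \<bullet> f x) has_derivative (\<lambda>h. 0 + (f x \<bullet> f' x h + f' x h \<bullet> f x))) (at x)"
      by (rule has_derivative_add[OF has_derivative_const has_derivative_inner[OF f' f']])
    then have "((\<lambda>x. sqrt (1 + f x \<bullet> f x)) has_derivative
        (\<lambda>h. (0 + (f x \<bullet> f' x h + f' x h \<bullet> f x)) * (inverse (sqrt (1 + f x \<bullet> f x)) / 2))) (at x)"
      by (rule DERIV_compose_FDERIV[where g="\<lambda>x. 1 + f x \<bullet> f x", OF DERIV_real_sqrt[OF pos[of x]]])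
    moreover have "(\<lambda>h. (0 + (f x \<bullet> f' x h + f' x h \<bullet> f x)) * (inverse (sqrt (1 + f x \<bullet> f x)) / 2)) =
        blinfun_apply (inverse (sqrt (1 + f x \<bullet> f x)) *\<^sub>R (blinfun_inner_left (f x) o\<^sub>L f' x))"
      by (rule ext) (simp add: blinfun.scaleR_left blinfun_inner_left.rep_eq inner_commute[of "f' x _"])
    ultimately show ?thesis by simp
  qed
  moreover have "continuous_on UNIV
      (\<lambda>x. inverse (sqrt (1 + f x \<bullet> f x)) *\<^sub>R (blinfun_inner_left (f x) o\<^sub>L f' x))"
    using assms C1_with_imp_continuous_on[OF assms] unfolding C1_with_def
    by (intro continuous_intros) (simp_all add: pos[THEN less_imp_neq, symmetric])
  ultimately show ?thesis unfolding C1_with_def by blast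
qed

lemma coercive_sqrt_one_plus_inner:
  fixes f :: "'a::euclidean_space \<Rightarrow> 'b::euclidean_space"
  assumes contf: "continuous_on UNIV f" and contg: "continuous_on UNIV g" and gf: "\<And>x. g (f x) = x"
  shows "coercive (\<lambda>x. sqrt (1 + f x \<bullet> f x))"
  unfolding coercive_def filterlim_at_top
proof (intro conjI allI)
  show "continuous_on UNIV (\<lambda>x. sqrt (1 + f x \<bullet> f x))"
    by (intro continuous_intros contf)
  fix Z :: real
  have "compact (g ` cball 0 \<bar>Z\<bar>)"
    by (rule compact_continuous_image) (auto intro: continuous_on_subset[OF contg])
  then obtain R where R: "\<And>x. x \<in> g ` cball 0 \<bar>Z\<bar> \<Longrightarrow> norm x \<le> R"
    using compact_imp_bounded bounded_iff by metis
  have "Z \<le> sqrt (1 + f x \<bullet> f x)" if "R < norm x" for x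
  proof (rule ccontr)
    assume "\<not> Z \<le> sqrt (1 + f x \<bullet> f x)"
    moreover have "norm (f x) \<le> sqrt (1 + f x \<bullet> f x)"
      unfolding norm_eq_sqrt_inner by (simp add: real_sqrt_le_mono)
    ultimately have "f x \<in> cball 0 \<bar>Z\<bar>" by simp
    then have "x \<in> g ` cball 0 \<bar>Z\<bar>" using gf[of x] by (metis image_eqI)
    then show False using R that by fastforce
  qed
  then show "\<forall>\<^sub>F x in at_infinity. Z \<le> sqrt (1 + f x \<bullet> f x)"
    unfolding eventually_at_infinity by (meson gt_ex less_le_trans)
qed

lemma global_diffeo_imp_coercive_weight:
  fixes f :: "'a::euclidean_space \<Rightarrow> 'a"
  assumes C1f: "C1_with f f'" and diffeo: "global_diffeo f"
  shows "\<exists>k k'. C1_with k k' \<and> (\<forall>x. k x \<ge> 0) \<and> coercive k \<and>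
    bdd_above (range (\<lambda>x. onorm (blinfun_apply (k' x) \<circ> inv (blinfun_apply (f' x)))))"
proof -
  obtain g g' where gf: "\<And>x. g (f x) = x" and C1g: "C1_with g g'"
    using diffeo unfolding global_diffeo_def C1_map_def by blast
  define k where "k x = sqrt (1 + f x \<bullet> f x)" for x
  define k' where "k' x = inverse (k x) *\<^sub>R (blinfun_inner_left (f x) o\<^sub>L f' x)" for x
  have "onorm (blinfun_apply (k' x) \<circ> inv (blinfun_apply (f' x))) \<le> 1" for x
  proof (rule onorm_le)
    fix u
    have "0 < k x" unfolding k_def by (simp add: add_pos_nonneg)
    have "norm (f x) \<le> k x"
      unfolding k_def norm_eq_sqrt_inner by (simp add: real_sqrt_le_mono)
    have "blinfun_apply (f' x) (inv (blinfun_apply (f' x)) u) = u"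
      using global_diffeo_imp_bij_derivative[OF C1f diffeo] by (simp add: bij_is_surj surj_f_inv_f)
    then have "norm ((blinfun_apply (k' x) \<circ> inv (blinfun_apply (f' x))) u) = \<bar>u \<bullet> f x\<bar> / k x"
      using \<open>0 < k x\<close> by (simp add: k'_def blinfun.scaleR_left blinfun_inner_left.rep_eq abs_mult divide_inverse mult.commute)
    also have "\<dots> \<le> norm u * norm (f x) / k x"
      by (intro divide_right_mono Cauchy_Schwarz_ineq2) (use \<open>0 < k x\<close> in simp)
    also have "\<dots> \<le> 1 * norm u"
      using \<open>0 < k x\<close> \<open>norm (f x) \<le> k x\<close> by (simp add: divide_le_eq mult_left_mono)
    finally show "norm ((blinfun_apply (k' x) \<circ> inv (blinfun_apply (f' x))) u) \<le> 1 * norm u" .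
  qed
  moreover have "C1_with k k'"
    unfolding k_def k'_def by (rule C1_with_sqrt_one_plus_inner[OF C1f])
  moreover have "coercive k"
    unfolding k_def
    by (rule coercive_sqrt_one_plus_inner[OF C1_with_imp_continuous_on[OF C1f]
          C1_with_imp_continuous_on[OF C1g] gf])
  moreover have "\<forall>x. k x \<ge> 0" by (simp add: k_def)
  ultimately show ?thesis
    by (intro exI[of _ k] exI[of _ k'] conjI bdd_aboveI[of _ 1]) auto
qed

lemma det_matrix_neq_0_iff_bij:
  fixes L :: "real ^ 'n \<Rightarrow> real ^ 'n"
  assumes "linear L"
  shows "det (matrix L) \<noteq> 0 \<longleftrightarrow> bij L"
  using invertible_eq_bij[of "matrix L"] matrix_vector_mul(2)[OF assms]
  by (simp add: invertible_det_nz)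

theorem theorem4p3:
  fixes f :: "real ^ 'n \<Rightarrow> real ^ 'n"
    and f' :: "real ^ 'n \<Rightarrow> ((real ^ 'n) \<Rightarrow>\<^sub>L (real ^ 'n))"
  assumes "C1_with f f'"
  shows "global_diffeo f \<longleftrightarrow>
    ((\<forall>x. det (matrix (blinfun_apply (f' x))) \<noteq> 0) \<and>
     (\<exists>k k'. C1_with k k' \<and> (\<forall>x. k x \<ge> 0) \<and> coercive k \<and>
        bdd_above (range (\<lambda>x. onorm (blinfun_apply (k' x) \<circ> inv (blinfun_apply (f' x)))))))"
proof -
  have "det (matrix (blinfun_apply (f' x))) \<noteq> 0 \<longleftrightarrow> bij (blinfun_apply (f' x))" for x
    by (intro det_matrix_neq_0_iff_bij bounded_linear.linear blinfun.bounded_linear_right)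
  then show ?thesis
    using global_diffeo_imp_bij_derivative[OF assms] global_diffeo_imp_coercive_weight[OF assms]
      global_diffeo_if_coercive_weight[OF assms]
    by blast
qed

end
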